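(* Let $F$ be a field of characteristic $0$ and let $E^{can}$ be the Grassmann algebra $E$ with the $\mathbb{Z}$-grading in which every generator $e_i$ has degree $1$ (so the component of degree $n\ge 1$ is spanned by the basis monomials $e_{i_1}\cdots e_{i_n}$, $i_1<\cdots<i_n$, the component of degree $0$ is $F$, and components of negative degree are $0$). Then $T_{\mathbb{Z}}(E^{can})$ is generated, as a $T_{\mathbb{Z}}$-ideal, by the following graded polynomials: $x$ for every variable $x$ with $\alpha(x)<0$; $[x_1,x_2]$ for all variables $x_1,x_2$ such that $\alpha(x_1)$ or $\alpha(x_2)$ is even; $x_1x_2+x_2x_1$ for all variables $x_1,x_2$ with $\alpha(x_1)$ and $\alpha(x_2)$ both odd.
   Context: $L$ is a vector space over $F$ with basis $e_1,e_2,\dots$, and $E$ is the unital Grassmann algebra of $L$: it has basis $1$ and the products $e_{i_1}\cdots e_{i_k}$ with $i_1<\cdots<i_k$, $k\ge1$, with multiplication induced by $e_ie_j=-e_je_i$. $F\langle X|\mathbb{Z}\rangle$ is the free unital associative algebra on $X=\bigcup_{i\in\mathbb{Z}}X_i$, where each $X_i$ is a countably infinite set of variables of degree $i$; $\alpha(x)$ denotes the degree of the variable $x$, and $F\langle X|\mathbb{Z}\rangle$ is $\mathbb{Z}$-graded by the total degree of monomials. A polynomial $f(x_1,\dots,x_r)\in F\langle X|\mathbb{Z}\rangle$ is a $\mathbb{Z}$-graded identity of a $\mathbb{Z}$-graded algebra $A=\oplus_n A_n$ if $f(a_1,\dots,a_r)=0$ whenever $a_j\in A_{\alpha(x_j)}$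 for all $j$; $T_{\mathbb{Z}}(A)$ is the set of these. A $T_{\mathbb{Z}}$-ideal is an ideal of $F\langle X|\mathbb{Z}\rangle$ invariant under all degree-preserving endomorphisms; the $T_{\mathbb{Z}}$-ideal generated by a set $S$ is the smallest one containing $S$. $[a,b]=ab-ba$. *)

theory Defs
  imports Main
begin

text \<open>Variables: a variable is a pair (i, k) : int \<times> nat; it belongs to X_i, i.e. its
  degree alpha is i. Each X_i = {i} \<times> UNIV is countably infinite.\<close>
type_synonym var = "int \<times> nat"

definition alpha :: "var \<Rightarrow> int" where "alpha x = fst x"

text \<open>Free unital associative algebra F<X|Z>: finitely supported coefficient
  functions on words (lists of variables).\<close>
type_synonym 'a fpoly = "var list \<Rightarrow> 'a"

definition polys :: "('a::field) fpoly set" where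
  "polys = {p. finite {w. p w \<noteq> 0}}"

definition pzero :: "('a::field) fpoly" where "pzero = (\<lambda>w. 0)"
definition mono :: "var list \<Rightarrow> ('a::field) fpoly" where
  "mono u = (\<lambda>w. if w = u then 1 else 0)"
definition pone :: "('a::field) fpoly" where "pone = mono []"
definition padd :: "('a::field) fpoly \<Rightarrow> 'a fpoly \<Rightarrow> 'a fpoly" where
  "padd p q = (\<lambda>w. p w + q w)"
definition pdiff :: "('a::field) fpoly \<Rightarrow> 'a fpoly \<Rightarrow> 'a fpoly" where
  "pdiff p q = (\<lambda>w. p w - q w)"
definition pmul :: "('a::field) fpoly \<Rightarrow> 'a fpoly \<Rightarrow> 'a fpoly" where
  "pmul p q = (\<lambda>w. \<Sum>i\<le>length w. p (take i w) * q (drop i w))"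

definition homog :: "int \<Rightarrow> ('a::field) fpoly \<Rightarrow> bool" where
  "homog n p \<longleftrightarrow> p \<in> polys \<and> (\<forall>w. p w \<noteq> 0 \<longrightarrow> sum_list (map alpha w) = n)"

definition pword :: "(var \<Rightarrow> ('a::field) fpoly) \<Rightarrow> var list \<Rightarrow> 'a fpoly" where
  "pword \<psi> w = foldr (\<lambda>x acc. pmul (\<psi> x) acc) w pone"
definition psubst :: "(var \<Rightarrow> ('a::field) fpoly) \<Rightarrow> 'a fpoly \<Rightarrow> 'a fpoly" where
  "psubst \<psi> p = (\<lambda>v. \<Sum>w\<in>{w. p w \<noteq> 0}. p w * pword \<psi> w v)"

definition two_sided_ideal :: "('a::field) fpoly set \<Rightarrow> bool" where
  "two_sided_ideal I \<longleftrightarrow> I \<subseteq> polys \<and> pzero \<in> I \<and>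
     (\<forall>p\<in>I. \<forall>q\<in>I. padd p q \<in> I) \<and>
     (\<forall>p\<in>I. \<forall>q\<in>polys. pmul q p \<in> I \<and> pmul p q \<in> I)"

definition TZ_ideal :: "('a::field) fpoly set \<Rightarrow> bool" where
  "TZ_ideal I \<longleftrightarrow> two_sided_ideal I \<and>
     (\<forall>\<psi>. (\<forall>x. homog (alpha x) (\<psi> x)) \<longrightarrow> (\<forall>p\<in>I. psubst \<psi> p \<in> I))"

definition TZ_generated :: "('a::field) fpoly set \<Rightarrow> 'a fpoly set" where
  "TZ_generated S = \<Inter> {I. TZ_ideal I \<and> S \<subseteq> I}"

text \<open>Grassmann algebra E: element = coefficient function on finite subsets of nat
  (the set {i1<...<ik} stands for the basis monomial e_i1...e_ik), finitely supported.\<close>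
type_synonym 'a grass = "nat set \<Rightarrow> 'a"

definition gelems :: "('a::field) grass set" where
  "gelems = {a. finite {S. a S \<noteq> 0} \<and> (\<forall>S. a S \<noteq> 0 \<longrightarrow> finite S)}"

definition gsign :: "nat set \<Rightarrow> nat set \<Rightarrow> 'a::field" where
  "gsign T U = (-1) ^ card {(t, u). t \<in> T \<and> u \<in> U \<and> u < t}"

definition gone :: "('a::field) grass" where
  "gone = (\<lambda>S. if S = {} then 1 else 0)"

definition gmul :: "('a::field) grass \<Rightarrow> 'a grass \<Rightarrow> 'a grass" where
  "gmul a b = (\<lambda>S. if finite S then (\<Sum>T\<in>Pow S. gsign T (S - T) * a T * b (S - T)) else 0)"

definition Ecan :: "int \<Rightarrow> ('a::field) grass set" where
  "Ecan n = {a \<in> gelems. \<forall>S. a S \<noteq> 0 \<longrightarrow> int (card S) = n}"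

definition gword :: "(var \<Rightarrow> ('a::field) grass) \<Rightarrow> var list \<Rightarrow> 'a grass" where
  "gword \<phi> w = foldr (\<lambda>x acc. gmul (\<phi> x) acc) w gone"

definition evalE :: "('a::field) fpoly \<Rightarrow> (var \<Rightarrow> 'a grass) \<Rightarrow> 'a grass" where
  "evalE p \<phi> = (\<lambda>S. \<Sum>w\<in>{w. p w \<noteq> 0}. p w * gword \<phi> w S)"

definition TZ_Ecan :: "('a::field) fpoly set" where
  "TZ_Ecan = {p \<in> polys. \<forall>\<phi>. (\<forall>x. \<phi> x \<in> Ecan (alpha x)) \<longrightarrow> evalE p \<phi> = (\<lambda>S. 0)}"

definition gens_Ecan :: "('a::field) fpoly set" where
  "gens_Ecan =
     {mono [x] | x. alpha x < 0}
   \<union> {pdiff (mono [x1, x2]) (mono [x2, x1]) | x1 x2. even (alpha x1) \<or> even (alpha x2)}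
   \<union> {padd (mono [x1, x2]) (mono [x2, x1]) | x1 x2. odd (alpha x1) \<and> odd (alpha x2)}"

end

theory Submission
  imports Defs "HOL-Computational_Algebra.Polynomial" "HOL-Library.Multiset"
    "HOL-Library.Countable" "HOL-Library.Product_Lexorder"
begin

text \<open>Evaluation in \<open>E\<^sup>c\<^sup>a\<^sup>n\<close> is a homomorphism that commutes with graded substitutions, so
  \<open>T\<^sub>\<int>(E\<^sup>c\<^sup>a\<^sup>n)\<close> is a \<open>T\<^sub>\<int>\<close>-ideal; it contains the generators because
  \<open>e\<^sub>T e\<^sub>U = (-1)^(|T| |U|) e\<^sub>U e\<^sub>T\<close>. Conversely, modulo the generators every word is a signed
  multiple of its sorted rearrangement, and a sorted word containing a variable of negative
  degree or two copies of a variable of odd degree lies in the ideal (halving \<open>2x\<^sup>2\<close> needs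
  characteristic 0). Hence every polynomial is congruent to a combination of sorted reduced
  words, and it remains to show that such a combination is an identity only if it is zero.
  As \<open>F\<close> is infinite, rescaling one variable shows that the multihomogeneous components of an
  identity are identities, which leaves a single sorted reduced word \<open>w\<close>. If a variable \<open>x\<close> of
  degree \<open>d > 0\<close> occurs \<open>k\<close> times in \<open>w\<close>, send it to the sum of \<open>k\<close> basis monomials on pairwise
  disjoint blocks of \<open>d\<close> generators: for even \<open>d\<close> these summands commute and square to zero, so
  \<open>x\<^sup>k\<close> goes to \<open>k!\<close> times the basis monomial of the union of the blocks, and \<open>w\<close> evaluates to a
  nonzero multiple of a basis monomial.\<close>

section \<open>The Grassmann algebra\<close>

definition gbasis :: "nat set \<Rightarrow> ('a::field) grass" where
  "gbasis T = (\<lambda>S. if S = T then 1 else 0)"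

definition gscale :: "'a \<Rightarrow> ('a::field) grass \<Rightarrow> 'a grass" where
  "gscale c a = (\<lambda>S. c * a S)"

definition gsupp :: "('a::field) grass \<Rightarrow> nat set set" where
  "gsupp a = {S. a S \<noteq> 0}"

lemma gscale_gscale: "gscale c (gscale d a) = gscale (c * d) a"
  by (simp add: gscale_def mult.assoc)

lemma gscale_one [simp]: "gscale 1 a = a"
  by (simp add: gscale_def)

lemma gscale_zero [simp]: "gscale c (\<lambda>S. 0) = (\<lambda>S. 0)"
  by (simp add: gscale_def)

lemma gmul_sum_left: "gmul (\<lambda>S. \<Sum>i\<in>I. f i S) b = (\<lambda>S. \<Sum>i\<in>I. gmul (f i) b S)"
  unfolding gmul_def
  by (auto simp: fun_eq_iff sum_distrib_left sum_distrib_right mult.assoc intro: sum.swap)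

lemma gmul_sum_right: "gmul b (\<lambda>S. \<Sum>i\<in>I. f i S) = (\<lambda>S. \<Sum>i\<in>I. gmul b (f i) S)"
  unfolding gmul_def
  by (auto simp: fun_eq_iff sum_distrib_left sum_distrib_right mult.assoc intro: sum.swap)

lemma gmul_add_left: "gmul (\<lambda>S. a S + b S) c = (\<lambda>S. gmul a c S + gmul b c S)"
  unfolding gmul_def by (auto simp: fun_eq_iff algebra_simps sum.distrib)

lemma gmul_add_right: "gmul c (\<lambda>S. a S + b S) = (\<lambda>S. gmul c a S + gmul c b S)"
  unfolding gmul_def by (auto simp: fun_eq_iff algebra_simps sum.distrib)

lemma gmul_gscale_left: "gmul (gscale k a) c = gscale k (gmul a c)"
  unfolding gmul_def gscale_def by (auto simp: fun_eq_iff algebra_simps sum_distrib_left)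

lemma gmul_gscale_right: "gmul c (gscale k a) = gscale k (gmul c a)"
  unfolding gmul_def gscale_def by (auto simp: fun_eq_iff algebra_simps sum_distrib_left)

lemma gmul_zero_left [simp]: "gmul (\<lambda>S. 0) c = (\<lambda>S. 0)"
  unfolding gmul_def by auto

lemma gmul_zero_right [simp]: "gmul c (\<lambda>S. 0) = (\<lambda>S. 0)"
  unfolding gmul_def by auto

lemma gsign_nonzero [simp]: "(gsign T U :: 'a::field) \<noteq> 0"
  unfolding gsign_def by simp

lemma gsign_square: "(gsign T U :: 'a::field) * gsign T U = 1"
  unfolding gsign_def by (simp add: power_mult_distrib[symmetric])

lemma gsign_empty_left [simp]: "gsign {} U = 1" and gsign_empty_right [simp]: "gsign T {} = 1"
  by (simp_all add: gsign_def)

lemma finite_inversions: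
  "finite T \<Longrightarrow> finite U \<Longrightarrow> finite {(t, u). t \<in> T \<and> u \<in> U \<and> u < t}"
  by (rule finite_subset[of _ "T \<times> U"]) auto

lemma gsign_Un_left:
  assumes "finite T" "finite U" "finite V" "T \<inter> U = {}"
  shows "(gsign (T \<union> U) V :: 'a::field) = gsign T V * gsign U V"
proof -
  have "{(t, u). t \<in> T \<union> U \<and> u \<in> V \<and> u < t} =
        {(t, u). t \<in> T \<and> u \<in> V \<and> u < t} \<union> {(t, u). t \<in> U \<and> u \<in> V \<and> u < t}" by auto
  moreover have "card \<dots> = card {(t, u). t \<in> T \<and> u \<in> V \<and> u < t} + card {(t, u). t \<in> U \<and> u \<in> V \<and> u < t}"
    using assms by (intro card_Un_disjoint finite_inversions) auto
  ultimately show ?thesis unfolding gsign_def by (simp add: power_add)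
qed

lemma gsign_Un_right:
  assumes "finite T" "finite U" "finite V" "U \<inter> V = {}"
  shows "(gsign T (U \<union> V) :: 'a::field) = gsign T U * gsign T V"
proof -
  have "{(t, u). t \<in> T \<and> u \<in> U \<union> V \<and> u < t} =
        {(t, u). t \<in> T \<and> u \<in> U \<and> u < t} \<union> {(t, u). t \<in> T \<and> u \<in> V \<and> u < t}" by auto
  moreover have "card \<dots> = card {(t, u). t \<in> T \<and> u \<in> U \<and> u < t} + card {(t, u). t \<in> T \<and> u \<in> V \<and> u < t}"
    using assms by (intro card_Un_disjoint finite_inversions) auto
  ultimately show ?thesis unfolding gsign_def by (simp add: power_add)
qed

lemma gsign_mult_gsign_swap:
  assumes "finite T" "finite U" "T \<inter> U = {}"
  shows "(gsign T U :: 'a::field) * gsign U T = (-1) ^ (card T * card U)"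
proof -
  let ?inv = "{(t, u). t \<in> T \<and> u \<in> U \<and> u < t}"
  let ?inv' = "{(u, t). u \<in> U \<and> t \<in> T \<and> t < u}"
  have "T \<times> U = ?inv \<union> prod.swap ` ?inv'"
    using assms by (auto simp: image_iff)
  moreover have "card (?inv \<union> prod.swap ` ?inv') = card ?inv + card (prod.swap ` ?inv')"
    using assms by (intro card_Un_disjoint finite_inversions finite_imageI) auto
  moreover have "card (prod.swap ` ?inv') = card ?inv'"
    by (intro card_image) (auto simp: inj_on_def)
  ultimately have "card (T \<times> U) = card ?inv + card ?inv'"
    by simp
  then show ?thesis unfolding gsign_def by (simp add: power_add card_cartesian_product)
qed

lemma gmul_gbasis:
  assumes "finite T" "finite U"
  shows "gmul (gbasis T) (gbasis U) =
    (if T \<inter> U = {} then gscale (gsign T U) (gbasis (T \<union> U)) else (\<lambda>S. 0))"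
proof
  fix S
  show "gmul (gbasis T) (gbasis U) S =
    (if T \<inter> U = {} then gscale (gsign T U) (gbasis (T \<union> U)) else (\<lambda>S. 0)) S"
  proof (cases "finite S")
    case True
    have "gmul (gbasis T) (gbasis U) S = (\<Sum>X\<in>Pow S. gsign X (S - X) * gbasis T X * gbasis U (S - X))"
      using True by (simp add: gmul_def)
    also have "\<dots> = (\<Sum>X\<in>Pow S. if X = T then (if S - X = U then gsign X (S - X) else 0) else 0)"
      by (rule sum.cong) (auto simp: gbasis_def)
    also have "\<dots> = (if T \<subseteq> S \<and> S - T = U then gsign T U else 0)"
      using True by (subst sum.delta) auto
    also have "\<dots> = (if T \<inter> U = {} then gscale (gsign T U) (gbasis (T \<union> U)) else (\<lambda>S. 0)) S"
      by (auto simp: gscale_def gbasis_def)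
    finally show ?thesis .
  next
    case False
    then show ?thesis using assms by (auto simp: gmul_def gscale_def gbasis_def)
  qed
qed

lemma gmul_gbasis_assoc:
  assumes "finite T" "finite U" "finite V"
  shows "gmul (gmul (gbasis T) (gbasis U)) (gbasis V) =
    (gmul (gbasis T) (gmul (gbasis U) (gbasis V)) :: ('a::field) grass)"
proof (cases "T \<inter> U = {} \<and> U \<inter> V = {} \<and> T \<inter> V = {}")
  case True
  have "gmul (gmul (gbasis T) (gbasis U)) (gbasis V) =
      gscale (gsign T U * gsign (T \<union> U) V) (gbasis (T \<union> U \<union> V) :: 'a grass)"
    using True assms
    by (simp add: gmul_gbasis gmul_gscale_left Int_Un_distrib2) (simp add: gscale_def fun_eq_iff)
  moreover have "gmul (gbasis T) (gmul (gbasis U) (gbasis V)) =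
      gscale (gsign U V * gsign T (U \<union> V)) (gbasis (T \<union> (U \<union> V)) :: 'a grass)"
    using True assms
    by (simp add: gmul_gbasis gmul_gscale_right Int_Un_distrib) (simp add: gscale_def fun_eq_iff)
  moreover have "(gsign T U * gsign (T \<union> U) V :: 'a) = gsign U V * gsign T (U \<union> V)"
    using True assms by (simp add: gsign_Un_left gsign_Un_right)
  ultimately show ?thesis by (simp add: Un_assoc)
next
  case False
  then show ?thesis using assms
    by (auto simp: gmul_gbasis gmul_gscale_left gmul_gscale_right Int_Un_distrib Int_Un_distrib2)
qed

lemma gmul_gbasis_commute:
  assumes "finite T" "finite U"
  shows "gmul (gbasis T) (gbasis U) =
    gscale ((-1) ^ (card T * card U)) (gmul (gbasis U) (gbasis T) :: ('a::field) grass)"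
proof (cases "T \<inter> U = {}")
  case True
  have "(gsign T U :: 'a) = gsign T U * (gsign U T * gsign U T)" by (simp add: gsign_square)
  also have "\<dots> = (-1) ^ (card T * card U) * gsign U T"
    using gsign_mult_gsign_swap[OF assms True] by (simp add: mult.assoc[symmetric])
  finally show ?thesis
    using True assms by (simp add: gmul_gbasis gscale_gscale Un_commute Int_commute)
next
  case False
  then show ?thesis using assms by (simp add: gmul_gbasis Int_commute)
qed

lemma gsupp_finite: "a \<in> gelems \<Longrightarrow> T \<in> gsupp a \<Longrightarrow> finite T"
  by (auto simp: gelems_def gsupp_def)

lemma gelems_expand:
  assumes "a \<in> gelems"
  shows "a = (\<lambda>S. \<Sum>T\<in>gsupp a. gscale (a T) (gbasis T) S)"
proof
  fix S
  have "finite (gsupp a)" using assms by (simp add: gelems_def gsupp_def)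
  have "(\<Sum>T\<in>gsupp a. gscale (a T) (gbasis T) S) = (\<Sum>T\<in>gsupp a. if T = S then a S else 0)"
    by (rule sum.cong) (auto simp: gscale_def gbasis_def)
  also have "\<dots> = a S"
    using \<open>finite (gsupp a)\<close> by (cases "S \<in> gsupp a") (simp_all add: gsupp_def)
  finally show "a S = (\<Sum>T\<in>gsupp a. gscale (a T) (gbasis T) S)" by simp
qed

lemma gmul_assoc:
  assumes "a \<in> gelems" "b \<in> gelems" "c \<in> gelems"
  shows "gmul (gmul a b) c = gmul a (gmul b c)"
proof -
  have terms: "gmul (gmul (gscale (a T) (gbasis T)) (gscale (b U) (gbasis U))) (gscale (c V) (gbasis V)) =
      gmul (gscale (a T) (gbasis T)) (gmul (gscale (b U) (gbasis U)) (gscale (c V) (gbasis V)))"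
    if "T \<in> gsupp a" "U \<in> gsupp b" "V \<in> gsupp c" for T U V
  proof -
    have "finite T" "finite U" "finite V"
      using gsupp_finite assms that by blast+
    then show ?thesis
      by (simp add: gmul_gscale_left gmul_gscale_right gscale_gscale gmul_gbasis_assoc ac_simps)
  qed
  show ?thesis
    apply (subst (1 2) gelems_expand[OF assms(1)], subst (1 2) gelems_expand[OF assms(2)],
        subst (1 2) gelems_expand[OF assms(3)])
    apply (simp add: gmul_sum_left gmul_sum_right terms)
    done
qed

lemma gmul_gone_right: "a \<in> gelems \<Longrightarrow> gmul a gone = a"
  by (auto simp: fun_eq_iff gmul_def gone_def gelems_def if_distrib sum.delta' cong: if_cong)

lemma gmul_gone_left:
  assumes "a \<in> gelems" shows "gmul gone a = a"
proof
  fix S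
  show "gmul gone a S = a S"
  proof (cases "finite S")
    case True
    have "gmul gone a S = (\<Sum>T\<in>Pow S. gsign T (S - T) * gone T * a (S - T))"
      using True by (simp add: gmul_def)
    also have "\<dots> = (\<Sum>T\<in>Pow S. if T = {} then a (S - T) else 0)"
      by (rule sum.cong) (auto simp: gone_def)
    finally show ?thesis using True by (simp add: sum.delta)
  next
    case False
    then show ?thesis using assms by (auto simp: gmul_def gelems_def)
  qed
qed

lemma gone_eq_gbasis: "gone = gbasis {}"
  by (simp add: gone_def gbasis_def)

lemma Ecan_gelems: "a \<in> Ecan n \<Longrightarrow> a \<in> gelems"
  by (simp add: Ecan_def)

lemma Ecan_zero [simp]: "(\<lambda>S. 0) \<in> Ecan n"
  by (simp add: Ecan_def gelems_def)

lemma Ecan_add: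
  assumes a: "a \<in> Ecan n" and b: "b \<in> Ecan n"
  shows "(\<lambda>S. a S + b S) \<in> Ecan n"
proof -
  have "finite {S. a S + b S \<noteq> 0}"
    by (rule finite_subset[of _ "{S. a S \<noteq> 0} \<union> {S. b S \<noteq> 0}"])
      (use a b in \<open>auto simp: Ecan_def gelems_def\<close>)
  moreover have "a S \<noteq> 0 \<or> b S \<noteq> 0" if "a S + b S \<noteq> 0" for S using that by auto
  ultimately show ?thesis using a b unfolding Ecan_def gelems_def by blast
qed

lemma Ecan_gscale: "a \<in> Ecan n \<Longrightarrow> gscale c a \<in> Ecan n"
  unfolding Ecan_def gelems_def gscale_def
  by (auto elim!: finite_subset[rotated])

lemma Ecan_sum: "(\<And>i. i \<in> I \<Longrightarrow> f i \<in> Ecan n) \<Longrightarrow> (\<lambda>S. \<Sum>i\<in>I. f i S) \<in> Ecan n"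
proof (induction I rule: infinite_finite_induct)
  case (insert x F)
  then show ?case using Ecan_add[of "f x" n "\<lambda>S. \<Sum>i\<in>F. f i S"] by simp
qed simp_all

lemma gbasis_Ecan: "finite T \<Longrightarrow> gbasis T \<in> Ecan (int (card T))"
  by (auto simp: Ecan_def gelems_def gbasis_def)

lemma gone_Ecan: "gone \<in> Ecan 0"
  by (auto simp: Ecan_def gelems_def gone_def)

lemma Ecan_negative: "a \<in> Ecan n \<Longrightarrow> n < 0 \<Longrightarrow> a = (\<lambda>S. 0)"
  by (force simp: Ecan_def)

lemma gmul_nonzero_split:
  assumes "gmul a b S \<noteq> 0"
  obtains T where "finite S" "T \<subseteq> S" "a T \<noteq> 0" "b (S - T) \<noteq> 0"
proof -
  have "finite S" using assms by (auto simp: gmul_def split: if_splits)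
  then have "(\<Sum>T\<in>Pow S. gsign T (S - T) * a T * b (S - T)) \<noteq> 0"
    using assms by (simp add: gmul_def)
  then obtain T where "T \<in> Pow S" "gsign T (S - T) * a T * b (S - T) \<noteq> 0"
    using sum.not_neutral_contains_not_neutral by blast
  then show thesis using that \<open>finite S\<close> by auto
qed

lemma gmul_Ecan:
  assumes a: "a \<in> Ecan m" and b: "b \<in> Ecan n"
  shows "gmul a b \<in> Ecan (m + n)"
proof -
  have "{S. gmul a b S \<noteq> 0} \<subseteq> (\<lambda>(T, U). T \<union> U) ` ({T. a T \<noteq> 0} \<times> {U. b U \<noteq> 0})"
  proof
    fix S assume "S \<in> {S. gmul a b S \<noteq> 0}"
    then obtain T where "T \<subseteq> S" "a T \<noteq> 0" "b (S - T) \<noteq> 0"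
      by (auto elim: gmul_nonzero_split)
    then show "S \<in> (\<lambda>(T, U). T \<union> U) ` ({T. a T \<noteq> 0} \<times> {U. b U \<noteq> 0})"
      by (intro image_eqI[of _ _ "(T, S - T)"]) auto
  qed
  then have "finite {S. gmul a b S \<noteq> 0}"
    using a b by (elim finite_subset) (auto simp: Ecan_def gelems_def)
  moreover have "finite S \<and> int (card S) = m + n" if nz: "gmul a b S \<noteq> 0" for S
  proof -
    obtain T where T: "finite S" "T \<subseteq> S" "a T \<noteq> 0" "b (S - T) \<noteq> 0"
      using gmul_nonzero_split[OF nz] by blast
    have "card S = card T + card (S - T)"
      using T by (metis card_Diff_subset card_mono le_add_diff_inverse finite_subset)
    then show ?thesis using T a b by (auto simp: Ecan_def)
  qed
  ultimately show ?thesis by (auto simp: Ecan_def gelems_def)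
qed

lemma gmul_commute_Ecan:
  assumes a: "a \<in> Ecan (int m)" and b: "b \<in> Ecan (int n)"
  shows "gmul a b = gscale ((-1) ^ (m * n)) (gmul b a)"
proof -
  have ga: "a \<in> gelems" and gb: "b \<in> gelems" using a b by (auto simp: Ecan_def)
  have terms: "gmul (gscale (a T) (gbasis T)) (gscale (b U) (gbasis U)) =
      gscale ((-1) ^ (m * n)) (gmul (gscale (b U) (gbasis U)) (gscale (a T) (gbasis T)))"
    if "T \<in> gsupp a" "U \<in> gsupp b" for T U
  proof -
    have "finite T" "finite U" "card T = m" "card U = n"
      using that a b by (auto simp: Ecan_def gelems_def gsupp_def)
    then show ?thesis
      by (simp add: gmul_gscale_left gmul_gscale_right gscale_gscale gmul_gbasis_commute[of T U] ac_simps)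
  qed
  have "gmul a b = (\<lambda>S. \<Sum>T\<in>gsupp a. \<Sum>U\<in>gsupp b. gmul (gscale (a T) (gbasis T)) (gscale (b U) (gbasis U)) S)"
    by (subst gelems_expand[OF ga], subst gelems_expand[OF gb]) (simp add: gmul_sum_left gmul_sum_right)
  also have "\<dots> = (\<lambda>S. \<Sum>T\<in>gsupp a. \<Sum>U\<in>gsupp b.
      (-1) ^ (m * n) * gmul (gscale (b U) (gbasis U)) (gscale (a T) (gbasis T)) S)"
    using terms by (simp add: gscale_def)
  also have "\<dots> = gscale ((-1) ^ (m * n))
      (\<lambda>S. \<Sum>U\<in>gsupp b. \<Sum>T\<in>gsupp a. gmul (gscale (b U) (gbasis U)) (gscale (a T) (gbasis T)) S)"
    unfolding gscale_def by (simp add: sum_distrib_left) (rule ext, rule sum.swap)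
  also have "(\<lambda>S. \<Sum>U\<in>gsupp b. \<Sum>T\<in>gsupp a. gmul (gscale (b U) (gbasis U)) (gscale (a T) (gbasis T)) S) = gmul b a"
    by (subst (3) gelems_expand[OF ga], subst (3) gelems_expand[OF gb]) (simp add: gmul_sum_left gmul_sum_right)
  finally show ?thesis .
qed

section \<open>The free algebra\<close>

definition pscale :: "'a \<Rightarrow> ('a::field) fpoly \<Rightarrow> 'a fpoly" where
  "pscale c p = (\<lambda>w. c * p w)"

definition psupp :: "('a::field) fpoly \<Rightarrow> var list set" where
  "psupp p = {w. p w \<noteq> 0}"

lemma polys_iff_finite_psupp: "p \<in> polys \<longleftrightarrow> finite (psupp p)"
  by (simp add: polys_def psupp_def)

lemma mono_polys [simp]: "mono u \<in> polys"
  unfolding polys_def mem_Collect_eq by (rule finite_subset[of _ "{u}"]) (auto simp: mono_def)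

lemma pzero_polys [simp]: "pzero \<in> polys" and zero_polys [simp]: "(\<lambda>w. 0) \<in> polys"
  by (simp_all add: polys_def pzero_def)

lemma pone_polys [simp]: "pone \<in> polys"
  by (simp add: pone_def)

lemma padd_polys [simp]: "p \<in> polys \<Longrightarrow> q \<in> polys \<Longrightarrow> padd p q \<in> polys"
  unfolding polys_def padd_def mem_Collect_eq
  by (rule finite_subset[of _ "{w. p w \<noteq> 0} \<union> {w. q w \<noteq> 0}"]) auto

lemma pdiff_polys [simp]: "p \<in> polys \<Longrightarrow> q \<in> polys \<Longrightarrow> pdiff p q \<in> polys"
  unfolding polys_def pdiff_def mem_Collect_eq
  by (rule finite_subset[of _ "{w. p w \<noteq> 0} \<union> {w. q w \<noteq> 0}"]) auto

lemma pscale_polys [simp]: "p \<in> polys \<Longrightarrow> pscale c p \<in> polys"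
  unfolding polys_def pscale_def mem_Collect_eq
  by (rule finite_subset[of _ "{w. p w \<noteq> 0}"]) auto

lemma polys_sum: "(\<And>i. i \<in> I \<Longrightarrow> f i \<in> polys) \<Longrightarrow> (\<lambda>w. \<Sum>i\<in>I. f i w) \<in> polys"
proof (induction I rule: infinite_finite_induct)
  case (insert x F)
  then have "padd (f x) (\<lambda>w. \<Sum>i\<in>F. f i w) \<in> polys" by simp
  then show ?case using insert by (simp add: padd_def)
qed simp_all

lemma pmul_polys [simp]:
  assumes "p \<in> polys" "q \<in> polys" shows "pmul p q \<in> polys"
proof -
  have "{w. pmul p q w \<noteq> 0} \<subseteq> (\<lambda>(u, v). u @ v) ` ({w. p w \<noteq> 0} \<times> {w. q w \<noteq> 0})"
  proof
    fix w assume "w \<in> {w. pmul p q w \<noteq> 0}"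
    then have "(\<Sum>i\<le>length w. p (take i w) * q (drop i w)) \<noteq> 0" by (simp add: pmul_def)
    then obtain i where "p (take i w) * q (drop i w) \<noteq> 0"
      using sum.not_neutral_contains_not_neutral by blast
    then show "w \<in> (\<lambda>(u, v). u @ v) ` ({w. p w \<noteq> 0} \<times> {w. q w \<noteq> 0})"
      by (intro image_eqI[of _ _ "(take i w, drop i w)"]) auto
  qed
  then show ?thesis using assms unfolding polys_def mem_Collect_eq
    by (meson finite_SigmaI finite_imageI finite_subset)
qed

lemma take_drop_eq_iff:
  assumes "i \<le> length w"
  shows "(take i w = u \<and> drop i w = v) \<longleftrightarrow> (i = length u \<and> w = u @ v)"
proof
  assume h: "take i w = u \<and> drop i w = v"
  then have "w = u @ v" by (metis append_take_drop_id)
  moreover have "length u = i" using h assms by auto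
  ultimately show "i = length u \<and> w = u @ v" by simp
qed auto

lemma pmul_mono: "pmul (mono u) (mono v) = mono (u @ v)"
proof
  fix w
  have "pmul (mono u) (mono v) w = (\<Sum>i\<le>length w. if i = length u \<and> w = u @ v then 1 else 0)"
    unfolding pmul_def
  proof (rule sum.cong)
    fix i assume "i \<in> {..length w}"
    then have "(take i w = u \<and> drop i w = v) \<longleftrightarrow> (i = length u \<and> w = u @ v)"
      by (intro take_drop_eq_iff) simp
    moreover have "mono u (take i w) * mono v (drop i w) = (if take i w = u \<and> drop i w = v then 1 else 0)"
      by (simp add: mono_def)
    ultimately show "mono u (take i w) * mono v (drop i w) = (if i = length u \<and> w = u @ v then 1 else 0)"
      by simp
  qed simp
  also have "\<dots> = mono (u @ v) w" by (cases "w = u @ v") (simp_all add: mono_def)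
  finally show "pmul (mono u) (mono v) w = mono (u @ v) w" .
qed

lemma pmul_sum_left: "pmul (\<lambda>w. \<Sum>i\<in>I. f i w) q = (\<lambda>w. \<Sum>i\<in>I. pmul (f i) q w)"
  unfolding pmul_def by (auto simp: fun_eq_iff sum_distrib_right intro: sum.swap)

lemma pmul_sum_right: "pmul q (\<lambda>w. \<Sum>i\<in>I. f i w) = (\<lambda>w. \<Sum>i\<in>I. pmul q (f i) w)"
  unfolding pmul_def by (auto simp: fun_eq_iff sum_distrib_left intro: sum.swap)

lemma pmul_pscale_left: "pmul (pscale c p) q = pscale c (pmul p q)"
  unfolding pmul_def pscale_def by (auto simp: fun_eq_iff sum_distrib_left mult.assoc)

lemma pmul_pscale_right: "pmul q (pscale c p) = pscale c (pmul q p)"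
  unfolding pmul_def pscale_def by (auto simp: fun_eq_iff sum_distrib_left ac_simps)

lemma pmul_pdiff_left: "pmul (pdiff a b) q = pdiff (pmul a q) (pmul b q)"
  unfolding pmul_def pdiff_def by (auto simp: fun_eq_iff sum_subtractf algebra_simps)

lemma pmul_pdiff_right: "pmul q (pdiff a b) = pdiff (pmul q a) (pmul q b)"
  unfolding pmul_def pdiff_def by (auto simp: fun_eq_iff sum_subtractf algebra_simps)

lemma pmul_pone_left: "pmul pone p = p"
proof
  fix w
  have "pmul pone p w = (\<Sum>i\<le>length w. if i = 0 then p w else 0)"
    unfolding pmul_def pone_def mono_def by (rule sum.cong) auto
  then show "pmul pone p w = p w" by simp
qed

lemma poly_expand:
  assumes "finite W" "psupp p \<subseteq> W"
  shows "p = (\<lambda>v. \<Sum>w\<in>W. pscale (p w) (mono w) v)"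
proof
  fix v
  have "(\<Sum>w\<in>W. pscale (p w) (mono w) v) = (\<Sum>w\<in>W. if w = v then p v else 0)"
    by (rule sum.cong) (auto simp: pscale_def mono_def)
  also have "\<dots> = p v"
    using assms by (cases "v \<in> W") (auto simp: psupp_def)
  finally show "p v = (\<Sum>w\<in>W. pscale (p w) (mono w) v)" by simp
qed

section \<open>Evaluation in the Grassmann algebra\<close>

definition admissible :: "(var \<Rightarrow> ('a::field) grass) \<Rightarrow> bool" where
  "admissible \<phi> \<longleftrightarrow> (\<forall>x. \<phi> x \<in> Ecan (alpha x))"

lemma admissibleD: "admissible \<phi> \<Longrightarrow> \<phi> x \<in> Ecan (alpha x)"
  unfolding admissible_def by blast

lemma TZ_Ecan_iff:
  "p \<in> TZ_Ecan \<longleftrightarrow> p \<in> polys \<and> (\<forall>\<phi>. admissible \<phi> \<longrightarrow> evalE p \<phi> = (\<lambda>S. 0))"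
  by (simp add: TZ_Ecan_def admissible_def)

lemma evalE_pzero [simp]: "evalE pzero \<phi> = (\<lambda>S. 0)"
  by (simp add: evalE_def pzero_def)

lemma evalE_eq_sum:
  assumes "finite W" "psupp p \<subseteq> W"
  shows "evalE p \<phi> = (\<lambda>S. \<Sum>w\<in>W. p w * gword \<phi> w S)"
  unfolding evalE_def
  by (rule ext, rule sum.mono_neutral_left) (use assms in \<open>auto simp: psupp_def\<close>)

lemma evalE_sum:
  assumes "finite I" "\<And>i. i \<in> I \<Longrightarrow> f i \<in> polys"
  shows "evalE (\<lambda>w. \<Sum>i\<in>I. f i w) \<phi> = (\<lambda>S. \<Sum>i\<in>I. evalE (f i) \<phi> S)"
proof -
  define W where "W = (\<Union>i\<in>I. psupp (f i))"
  have fW: "finite W" using assms by (auto simp: W_def polys_iff_finite_psupp)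
  have "psupp (\<lambda>w. \<Sum>i\<in>I. f i w) \<subseteq> W"
    by (auto simp: W_def psupp_def dest: sum.not_neutral_contains_not_neutral)
  then have "evalE (\<lambda>w. \<Sum>i\<in>I. f i w) \<phi> = (\<lambda>S. \<Sum>w\<in>W. (\<Sum>i\<in>I. f i w) * gword \<phi> w S)"
    by (rule evalE_eq_sum[OF fW])
  also have "\<dots> = (\<lambda>S. \<Sum>i\<in>I. \<Sum>w\<in>W. f i w * gword \<phi> w S)"
    by (simp add: sum_distrib_right) (rule ext, rule sum.swap)
  also have "\<dots> = (\<lambda>S. \<Sum>i\<in>I. evalE (f i) \<phi> S)"
    by (rule ext, rule sum.cong, simp) (subst evalE_eq_sum[OF fW], auto simp: W_def)
  finally show ?thesis .
qed

lemma evalE_mono: "evalE (mono u) \<phi> = gword \<phi> u"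
proof -
  have "evalE (mono u) \<phi> = (\<lambda>S. \<Sum>w\<in>{u}. mono u w * gword \<phi> w S)"
    by (rule evalE_eq_sum) (auto simp: psupp_def mono_def split: if_splits)
  then show ?thesis by (simp add: mono_def)
qed

lemma evalE_pscale: "p \<in> polys \<Longrightarrow> evalE (pscale c p) \<phi> = gscale c (evalE p \<phi>)"
  by (simp add: evalE_eq_sum[of "psupp p"] polys_iff_finite_psupp psupp_def pscale_def gscale_def
      sum_distrib_left mult.assoc subset_iff)

lemma evalE_padd:
  "p \<in> polys \<Longrightarrow> q \<in> polys \<Longrightarrow> evalE (padd p q) \<phi> = (\<lambda>S. evalE p \<phi> S + evalE q \<phi> S)"
  using evalE_sum[of "{True, False}" "\<lambda>b. if b then p else q" \<phi>]
  by (simp add: padd_def)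

lemma evalE_pdiff:
  "p \<in> polys \<Longrightarrow> q \<in> polys \<Longrightarrow> evalE (pdiff p q) \<phi> = (\<lambda>S. evalE p \<phi> S - evalE q \<phi> S)"
proof -
  have "pdiff p q = padd p (pscale (-1) q)"
    by (simp add: pdiff_def padd_def pscale_def fun_eq_iff)
  then show "p \<in> polys \<Longrightarrow> q \<in> polys \<Longrightarrow> ?thesis"
    by (simp add: evalE_padd evalE_pscale gscale_def)
qed

lemma gword_Cons: "gword \<phi> (x # w) = gmul (\<phi> x) (gword \<phi> w)"
  by (simp add: gword_def)

lemma gword_Ecan: "admissible \<phi> \<Longrightarrow> gword \<phi> w \<in> Ecan (sum_list (map alpha w))"
  by (induction w) (auto simp: gword_def admissible_def gone_Ecan intro: gmul_Ecan)

lemma gword_append: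
  "admissible \<phi> \<Longrightarrow> gword \<phi> (u @ v) = gmul (gword \<phi> u) (gword \<phi> v)"
proof (induction u)
  case Nil
  then show ?case using gword_Ecan[of \<phi> v] by (simp add: gword_def gmul_gone_left Ecan_gelems)
next
  case (Cons x u)
  have "gword \<phi> ((x # u) @ v) = gmul (\<phi> x) (gmul (gword \<phi> u) (gword \<phi> v))"
    using Cons by (simp add: gword_Cons)
  also have "\<dots> = gmul (gmul (\<phi> x) (gword \<phi> u)) (gword \<phi> v)"
    using Cons.prems gword_Ecan[OF Cons.prems]
    by (intro gmul_assoc[symmetric]) (auto intro: Ecan_gelems admissibleD)
  finally show ?case by (simp add: gword_Cons)
qed

lemma gword_single: "admissible \<phi> \<Longrightarrow> gword \<phi> [x] = \<phi> x"
  using gmul_gone_right[OF Ecan_gelems[OF admissibleD]] by (simp add: gword_def)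

lemma gword_pair: "admissible \<phi> \<Longrightarrow> gword \<phi> [x, y] = gmul (\<phi> x) (\<phi> y)"
  using gword_single[of \<phi> y] by (simp add: gword_Cons)

lemma evalE_pmul:
  assumes p: "p \<in> polys" and q: "q \<in> polys" and \<phi>: "admissible \<phi>"
  shows "evalE (pmul p q) \<phi> = gmul (evalE p \<phi>) (evalE q \<phi>)"
proof -
  have fp: "finite (psupp p)" and fq: "finite (psupp q)"
    using p q by (simp_all add: polys_iff_finite_psupp)
  have "pmul p q =
      pmul (\<lambda>v. \<Sum>u\<in>psupp p. pscale (p u) (mono u) v) (\<lambda>v. \<Sum>w\<in>psupp q. pscale (q w) (mono w) v)"
    using poly_expand[OF fp subset_refl] poly_expand[OF fq subset_refl] by auto
  also have "\<dots> = (\<lambda>v. \<Sum>u\<in>psupp p. \<Sum>w\<in>psupp q. pscale (p u * q w) (mono (u @ w)) v)"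
    by (simp add: pmul_sum_left pmul_sum_right pmul_pscale_left pmul_pscale_right pmul_mono)
      (simp add: pscale_def ac_simps)
  finally have "evalE (pmul p q) \<phi> =
      (\<lambda>S. \<Sum>u\<in>psupp p. \<Sum>w\<in>psupp q. gscale (p u * q w) (gword \<phi> (u @ w)) S)"
    using fp fq by (simp add: evalE_sum polys_sum evalE_pscale evalE_mono)
  also have "\<dots> = (\<lambda>S. \<Sum>u\<in>psupp p. \<Sum>w\<in>psupp q.
      gmul (gscale (p u) (gword \<phi> u)) (gscale (q w) (gword \<phi> w)) S)"
    using \<phi> by (simp add: gword_append gmul_gscale_left gmul_gscale_right gscale_gscale ac_simps)
  also have "\<dots> = gmul (\<lambda>S. \<Sum>u\<in>psupp p. gscale (p u) (gword \<phi> u) S)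
      (\<lambda>S. \<Sum>w\<in>psupp q. gscale (q w) (gword \<phi> w) S)"
    by (simp add: gmul_sum_left gmul_sum_right)
  also have "\<dots> = gmul (evalE p \<phi>) (evalE q \<phi>)"
    by (simp add: evalE_eq_sum[OF fp] evalE_eq_sum[OF fq] gscale_def)
  finally show ?thesis .
qed

lemma evalE_Ecan:
  assumes "homog n q" "admissible \<phi>"
  shows "evalE q \<phi> \<in> Ecan n"
proof -
  have "evalE q \<phi> = (\<lambda>S. \<Sum>w\<in>psupp q. gscale (q w) (gword \<phi> w) S)"
    unfolding evalE_def psupp_def gscale_def by simp
  also have "\<dots> \<in> Ecan n"
    using assms gword_Ecan[of \<phi>] by (intro Ecan_sum Ecan_gscale) (auto simp: homog_def psupp_def)
  finally show ?thesis .
qed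

lemma pword_polys: "(\<And>x. \<psi> x \<in> polys) \<Longrightarrow> pword \<psi> w \<in> polys"
  by (induction w) (auto simp: pword_def)

lemma evalE_pword:
  assumes "\<And>x. homog (alpha x) (\<psi> x)" "admissible \<phi>"
  shows "evalE (pword \<psi> w) \<phi> = gword (\<lambda>x. evalE (\<psi> x) \<phi>) w"
proof (induction w)
  case Nil
  then show ?case by (simp add: pword_def gword_def pone_def evalE_mono)
next
  case (Cons x w)
  have "\<And>x. \<psi> x \<in> polys" using assms by (simp add: homog_def)
  then show ?case using Cons assms
    by (simp add: pword_def gword_Cons evalE_pmul pword_polys[unfolded pword_def])
qed

lemma psubst_eq: "psubst \<psi> p = (\<lambda>v. \<Sum>w\<in>psupp p. pscale (p w) (pword \<psi> w) v)"
  by (simp add: psubst_def psupp_def pscale_def)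

lemma psubst_polys: "(\<And>x. \<psi> x \<in> polys) \<Longrightarrow> psubst \<psi> p \<in> polys"
  unfolding psubst_eq by (intro polys_sum pscale_polys pword_polys)

lemma evalE_psubst:
  assumes "\<And>x. homog (alpha x) (\<psi> x)" "admissible \<phi>" "p \<in> polys"
  shows "evalE (psubst \<psi> p) \<phi> = evalE p (\<lambda>x. evalE (\<psi> x) \<phi>)"
proof -
  have "\<And>x. \<psi> x \<in> polys" using assms by (simp add: homog_def)
  moreover have "finite (psupp p)" using assms by (simp add: polys_iff_finite_psupp)
  ultimately show ?thesis unfolding psubst_eq
    by (simp add: evalE_sum pword_polys evalE_pscale evalE_pword[OF assms(1,2)])
      (simp add: evalE_def psupp_def gscale_def)
qed

lemma TZ_ideal_TZ_Ecan: "TZ_ideal (TZ_Ecan :: ('a::field) fpoly set)"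
  unfolding TZ_ideal_def two_sided_ideal_def
proof (intro conjI ballI allI impI)
  show "TZ_Ecan \<subseteq> (polys :: 'a fpoly set)" and "pzero \<in> (TZ_Ecan :: 'a fpoly set)"
    by (auto simp: TZ_Ecan_iff)
  fix p assume p: "p \<in> (TZ_Ecan :: 'a fpoly set)"
  show "padd p q \<in> TZ_Ecan" if "q \<in> TZ_Ecan" for q
    using p that by (simp add: TZ_Ecan_iff evalE_padd)
  show "pmul q p \<in> TZ_Ecan" and "pmul p q \<in> TZ_Ecan" if "q \<in> polys" for q
    using p that by (simp_all add: TZ_Ecan_iff evalE_pmul)
  fix \<psi> :: "var \<Rightarrow> 'a fpoly" assume \<psi>: "\<forall>x. homog (alpha x) (\<psi> x)"
  have "evalE (psubst \<psi> p) \<phi> = (\<lambda>S. 0)" if \<phi>: "admissible \<phi>" for \<phi>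
  proof -
    have "evalE (psubst \<psi> p) \<phi> = evalE p (\<lambda>x. evalE (\<psi> x) \<phi>)"
      using \<psi> \<phi> p by (intro evalE_psubst) (auto simp: TZ_Ecan_iff)
    moreover have "admissible (\<lambda>x. evalE (\<psi> x) \<phi>)"
      unfolding admissible_def using \<psi> \<phi> evalE_Ecan by blast
    ultimately show ?thesis using p by (simp add: TZ_Ecan_iff)
  qed
  moreover have "psubst \<psi> p \<in> polys"
    using \<psi> unfolding homog_def by (blast intro: psubst_polys)
  ultimately show "psubst \<psi> p \<in> TZ_Ecan" by (simp add: TZ_Ecan_iff)
qed

lemma gmul_commute_admissible:
  assumes "admissible \<phi>"
  shows "gmul (\<phi> x) (\<phi> y) = gscale ((-1) ^ (nat (alpha x) * nat (alpha y))) (gmul (\<phi> y) (\<phi> x))"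
proof (cases "alpha x < 0 \<or> alpha y < 0")
  case True
  then show ?thesis
    using Ecan_negative[OF admissibleD[OF assms, of x]] Ecan_negative[OF admissibleD[OF assms, of y]]
    by auto
next
  case False
  then have "\<phi> x \<in> Ecan (int (nat (alpha x)))" "\<phi> y \<in> Ecan (int (nat (alpha y)))"
    using admissibleD[OF assms] by auto
  then show ?thesis by (rule gmul_commute_Ecan)
qed

lemma gens_Ecan_subset_TZ_Ecan: "gens_Ecan \<subseteq> (TZ_Ecan :: ('a::field) fpoly set)"
proof
  fix g :: "'a fpoly" assume "g \<in> gens_Ecan"
  then consider (neg) x where "g = mono [x]" "alpha x < 0"
    | (even) x1 x2 where "g = pdiff (mono [x1, x2]) (mono [x2, x1])" "even (alpha x1) \<or> even (alpha x2)"
    | (odd) x1 x2 where "g = padd (mono [x1, x2]) (mono [x2, x1])" "odd (alpha x1)" "odd (alpha x2)"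
    unfolding gens_Ecan_def by blast
  then show "g \<in> TZ_Ecan"
  proof cases
    case neg
    then show ?thesis
      by (auto simp: TZ_Ecan_iff evalE_mono gword_single intro: Ecan_negative admissibleD)
  next
    case even
    have "even (nat k)" if "even k" for k :: int
      using that by (cases "k \<ge> 0") (auto simp: even_nat_iff)
    then have "even (nat (alpha x1) * nat (alpha x2))"
      using even(2) by auto
    then show ?thesis using even(1)
      by (auto simp: TZ_Ecan_iff evalE_mono evalE_pdiff gword_pair gmul_commute_admissible[of _ x1 x2]
          gscale_def)
  next
    case odd
    have anticommute: "gmul (\<phi> x1) (\<phi> x2) = gscale (-1) (gmul (\<phi> x2) (\<phi> x1))"
      if "admissible \<phi>" for \<phi> :: "var \<Rightarrow> 'a grass"
    proof (cases "alpha x1 < 0 \<or> alpha x2 < 0")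
      case True
      then have "\<phi> x1 = (\<lambda>S. 0) \<or> \<phi> x2 = (\<lambda>S. 0)"
        using Ecan_negative admissibleD[OF that] by blast
      then show ?thesis by auto
    next
      case False
      then have "odd (nat (alpha x1) * nat (alpha x2))"
        using odd by (simp add: even_nat_iff)
      then show ?thesis using gmul_commute_admissible[OF that, of x1 x2] by simp
    qed
    show ?thesis unfolding odd(1) TZ_Ecan_iff
      by (simp add: evalE_mono evalE_padd gword_pair anticommute gscale_def)
  qed
qed

section \<open>Reduction to sorted reduced words\<close>

definition swap_sign :: "var \<Rightarrow> var \<Rightarrow> 'a::field" where
  "swap_sign x y = (if odd (alpha x) \<and> odd (alpha y) then -1 else 1)"

text \<open>\<^const>\<open>sort\<close> is insertion sort, \<open>sort (x # xs) = insort x (sort xs)\<close>; these are the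
  products of the signs of the adjacent transpositions it performs.\<close>

fun insort_sign :: "var \<Rightarrow> var list \<Rightarrow> 'a::field" where
  "insort_sign x [] = 1"
| "insort_sign x (y # ys) = (if x \<le> y then 1 else swap_sign x y * insort_sign x ys)"

fun sort_sign :: "var list \<Rightarrow> 'a::field" where
  "sort_sign [] = 1"
| "sort_sign (x # xs) = sort_sign xs * insort_sign x (sort xs)"

definition reduced_word :: "var list \<Rightarrow> bool" where
  "reduced_word w \<longleftrightarrow> (\<forall>x\<in>set w. 0 \<le> alpha x \<and> (odd (alpha x) \<longrightarrow> count_list w x = 1))"

definition normal_coeff :: "var list \<Rightarrow> 'a::field" where
  "normal_coeff w = (if reduced_word (sort w) then sort_sign w else 0)"

definition normal_form :: "('a::field) fpoly \<Rightarrow> 'a fpoly" where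
  "normal_form p = (\<lambda>v. \<Sum>w\<in>psupp p. pscale (p w * normal_coeff w) (mono (sort w)) v)"

lemma normal_form_support: "normal_form (p :: ('a::field) fpoly) v \<noteq> 0 \<Longrightarrow> sorted v \<and> reduced_word v"
proof -
  assume "normal_form p v \<noteq> 0"
  then obtain w where "pscale (p w * normal_coeff w) (mono (sort w)) v \<noteq> 0"
    unfolding normal_form_def using sum.not_neutral_contains_not_neutral by blast
  then have "(normal_coeff w :: 'a) \<noteq> 0" "v = sort w"
    by (auto simp: pscale_def mono_def split: if_splits)
  then show ?thesis by (auto simp: normal_coeff_def split: if_splits)
qed

lemma sorted_adjacent_copies:
  assumes "sorted w" "2 \<le> count_list w x"
  shows "\<exists>u v. w = u @ x # x # v"
  using assms
proof (induction w)
  case Nil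
  then show ?case by simp
next
  case (Cons y w)
  show ?case
  proof (cases "2 \<le> count_list w x")
    case True
    then obtain u v where "w = u @ x # x # v" using Cons by auto
    then have "y # w = (y # u) @ x # x # v" by simp
    then show ?thesis by blast
  next
    case False
    then have "y = x" "count_list w x \<noteq> 0"
      using Cons.prems(2) by (auto split: if_splits)
    then have "x \<in> set w" by (simp add: count_list_0_iff)
    then obtain w' where "w = x # w'"
      using Cons.prems(1) \<open>y = x\<close> \<open>x \<in> set w\<close> by (cases w) (auto intro: order.antisym)
    then have "y # w = [] @ x # x # w'" using \<open>y = x\<close> by simp
    then show ?thesis by blast
  qed
qed

locale gens_ideal =
  fixes I :: "('a::field_char_0) fpoly set"
  assumes two_sided: "two_sided_ideal I" and gens_subset: "gens_Ecan \<subseteq> I"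
begin

lemma zero_mem: "(\<lambda>w. 0) \<in> I"
  using two_sided by (simp add: two_sided_ideal_def pzero_def)

lemma padd_mem: "p \<in> I \<Longrightarrow> q \<in> I \<Longrightarrow> padd p q \<in> I"
  using two_sided by (simp add: two_sided_ideal_def)

lemma pmul_left_mem: "p \<in> I \<Longrightarrow> q \<in> polys \<Longrightarrow> pmul q p \<in> I"
  using two_sided by (simp add: two_sided_ideal_def)

lemma pmul_right_mem: "p \<in> I \<Longrightarrow> q \<in> polys \<Longrightarrow> pmul p q \<in> I"
  using two_sided by (simp add: two_sided_ideal_def)

lemma pscale_mem: "p \<in> I \<Longrightarrow> pscale c p \<in> I"
  using pmul_left_mem[of p "pscale c pone"] by (simp add: pmul_pscale_left pmul_pone_left)

lemma pdiff_mem: "p \<in> I \<Longrightarrow> q \<in> I \<Longrightarrow> pdiff p q \<in> I"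
  using padd_mem[of p "pscale (-1) q"] pscale_mem[of q "-1"]
  by (simp add: pdiff_def padd_def pscale_def)

lemma sum_mem: "(\<And>i. i \<in> J \<Longrightarrow> f i \<in> I) \<Longrightarrow> (\<lambda>w. \<Sum>i\<in>J. f i w) \<in> I"
proof (induction J rule: infinite_finite_induct)
  case (insert x F)
  then have "padd (f x) (\<lambda>w. \<Sum>i\<in>F. f i w) \<in> I" by (intro padd_mem) auto
  then show ?case using insert by (simp add: padd_def)
qed (simp_all add: zero_mem)

lemma mono_context_mem: "mono w \<in> I \<Longrightarrow> mono (u @ w @ v) \<in> I"
  using pmul_left_mem[OF pmul_right_mem, of "mono w" "mono v" "mono u"] by (simp add: pmul_mono)

definition cong_scaled :: "'a fpoly \<Rightarrow> 'a \<Rightarrow> 'a fpoly \<Rightarrow> bool" where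
  "cong_scaled p c q \<longleftrightarrow> pdiff p (pscale c q) \<in> I"

lemma cong_scaled_refl: "cong_scaled p 1 p"
  using zero_mem by (simp add: cong_scaled_def pdiff_def pscale_def)

lemma cong_scaled_trans:
  assumes "cong_scaled p a q" "cong_scaled q b r"
  shows "cong_scaled p (a * b) r"
proof -
  have "pdiff p (pscale (a * b) r) = padd (pdiff p (pscale a q)) (pscale a (pdiff q (pscale b r)))"
    by (simp add: pdiff_def padd_def pscale_def fun_eq_iff algebra_simps)
  then show ?thesis using assms padd_mem pscale_mem unfolding cong_scaled_def by simp
qed

lemma cong_scaled_context:
  assumes "cong_scaled (mono w) c (mono w')"
  shows "cong_scaled (mono (u @ w @ v)) c (mono (u @ w' @ v))"
proof -
  have "pmul (mono u) (pmul (pdiff (mono w) (pscale c (mono w'))) (mono v)) =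
      pdiff (mono (u @ w @ v)) (pscale c (mono (u @ w' @ v)))"
    by (simp add: pmul_pdiff_left pmul_pdiff_right pmul_pscale_left pmul_pscale_right pmul_mono)
  then show ?thesis
    using assms pmul_left_mem[OF pmul_right_mem] unfolding cong_scaled_def by (metis mono_polys)
qed

lemma swap_cong: "cong_scaled (mono (u @ [x, y] @ v)) (swap_sign x y) (mono (u @ [y, x] @ v))"
proof (rule cong_scaled_context)
  show "cong_scaled (mono [x, y]) (swap_sign x y) (mono [y, x])"
  proof (cases "odd (alpha x) \<and> odd (alpha y)")
    case True
    then have "padd (mono [x, y]) (mono [y, x]) \<in> I"
      using gens_subset unfolding gens_Ecan_def by blast
    then show ?thesis
      using True by (simp add: cong_scaled_def swap_sign_def pdiff_def padd_def pscale_def)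
  next
    case False
    then have "pdiff (mono [x, y]) (mono [y, x]) \<in> I"
      using gens_subset unfolding gens_Ecan_def by blast
    moreover have "(swap_sign x y :: 'a) = 1" using False by (simp add: swap_sign_def)
    ultimately show ?thesis by (simp add: cong_scaled_def pscale_def)
  qed
qed

lemma insort_cong: "cong_scaled (mono (u @ x # ys @ v)) (insort_sign x ys) (mono (u @ insort x ys @ v))"
proof (induction ys arbitrary: u)
  case Nil
  then show ?case using cong_scaled_refl by simp
next
  case (Cons y ys)
  show ?case
  proof (cases "x \<le> y")
    case True
    then show ?thesis using cong_scaled_refl by simp
  next
    case False
    have "cong_scaled (mono (u @ x # y # ys @ v)) (swap_sign x y) (mono (u @ y # x # ys @ v))"
      using swap_cong[of u x y "ys @ v"] by simp
    moreover have "cong_scaled (mono (u @ y # x # ys @ v)) (insort_sign x ys) (mono (u @ y # insort x ys @ v))"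
      using Cons.IH[of "u @ [y]"] by simp
    ultimately show ?thesis using False cong_scaled_trans by simp
  qed
qed

lemma sort_cong: "cong_scaled (mono (u @ xs @ v)) (sort_sign xs) (mono (u @ sort xs @ v))"
proof (induction xs arbitrary: u)
  case Nil
  then show ?case using cong_scaled_refl by simp
next
  case (Cons x xs)
  have "cong_scaled (mono (u @ x # xs @ v)) (sort_sign xs) (mono (u @ x # sort xs @ v))"
    using Cons.IH[of "u @ [x]"] by simp
  then show ?case using insort_cong cong_scaled_trans by simp
qed

lemma nonreduced_mem:
  assumes "sorted w" "\<not> reduced_word w"
  shows "mono w \<in> I"
proof -
  obtain x where x: "x \<in> set w" "alpha x < 0 \<or> (odd (alpha x) \<and> count_list w x \<noteq> 1)"
    using assms(2) unfolding reduced_word_def by auto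
  show ?thesis
  proof (cases "alpha x < 0")
    case True
    then have "mono [x] \<in> I" using gens_subset unfolding gens_Ecan_def by blast
    moreover obtain u v where "w = u @ [x] @ v" using split_list[OF x(1)] by auto
    ultimately show ?thesis using mono_context_mem[of "[x]" u v] by simp
  next
    case False
    then have odd: "odd (alpha x)" and "count_list w x \<noteq> 1" using x(2) by auto
    moreover have "count_list w x \<noteq> 0" using x(1) by (simp add: count_list_0_iff)
    ultimately have "2 \<le> count_list w x" by simp
    then obtain u v where w: "w = u @ [x, x] @ v" using sorted_adjacent_copies assms(1) by fastforce
    have "padd (mono [x, x]) (mono [x, x]) \<in> I" using odd gens_subset unfolding gens_Ecan_def by blast
    then have "pscale (1/2) (padd (mono [x, x]) (mono [x, x])) \<in> I" by (rule pscale_mem)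
    moreover have "pscale (1/2) (padd (mono [x, x]) (mono [x, x])) = (mono [x, x] :: 'a fpoly)"
      by (simp add: pscale_def padd_def fun_eq_iff)
    ultimately show ?thesis using mono_context_mem[of "[x, x]" u v] w by simp
  qed
qed

lemma mono_cong_normal: "cong_scaled (mono w) (normal_coeff w) (mono (sort w))"
proof (cases "reduced_word (sort w)")
  case True
  then show ?thesis using sort_cong[of "[]" w "[]"] by (simp add: normal_coeff_def)
next
  case False
  have "pdiff (mono w) (pscale (sort_sign w) (mono (sort w))) \<in> I"
    using sort_cong[of "[]" w "[]"] by (simp add: cong_scaled_def)
  moreover have "pscale (sort_sign w) (mono (sort w)) \<in> I"
    using nonreduced_mem[OF sorted_sort False] by (rule pscale_mem)
  ultimately have "padd (pdiff (mono w) (pscale (sort_sign w) (mono (sort w))))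
      (pscale (sort_sign w) (mono (sort w))) \<in> I"
    by (rule padd_mem)
  then show ?thesis
    using False by (simp add: cong_scaled_def normal_coeff_def padd_def pdiff_def pscale_def)
qed

lemma diff_normal_form_mem:
  assumes "p \<in> polys"
  shows "pdiff p (normal_form p) \<in> I"
proof -
  have "pdiff p (normal_form p) =
      (\<lambda>v. \<Sum>w\<in>psupp p. pscale (p w) (pdiff (mono w) (pscale (normal_coeff w) (mono (sort w)))) v)"
  proof
    fix v
    have "p v = (\<Sum>w\<in>psupp p. pscale (p w) (mono w) v)"
      using assms poly_expand[of "psupp p" p] by (metis polys_iff_finite_psupp subset_refl)
    then show "pdiff p (normal_form p) v =
        (\<Sum>w\<in>psupp p. pscale (p w) (pdiff (mono w) (pscale (normal_coeff w) (mono (sort w)))) v)"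
      by (simp add: pdiff_def normal_form_def pscale_def sum_subtractf algebra_simps)
  qed
  also have "\<dots> \<in> I"
    using mono_cong_normal by (intro sum_mem pscale_mem) (simp add: cong_scaled_def)
  finally show ?thesis .
qed

end

section \<open>Identities supported on sorted reduced words vanish\<close>

definition count_component :: "var \<Rightarrow> nat \<Rightarrow> ('a::field) fpoly \<Rightarrow> 'a fpoly" where
  "count_component x k r = (\<lambda>w. if count_list w x = k then r w else 0)"

definition multidegree_component :: "var list \<Rightarrow> var list \<Rightarrow> ('a::field) fpoly \<Rightarrow> 'a fpoly" where
  "multidegree_component v xs r = foldr (\<lambda>x. count_component x (count_list v x)) xs r"

lemma multidegree_component_apply:
  "multidegree_component v xs r w =
    (if \<forall>x\<in>set xs. count_list w x = count_list v x then r w else 0)"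
  by (induction xs) (auto simp: multidegree_component_def count_component_def)

lemma coeff_eq_0_if_sum_powers_eq_0:
  fixes e :: "nat \<Rightarrow> 'a::{idom,ring_char_0}"
  assumes "\<And>t. (\<Sum>j\<le>D. e j * t ^ j) = 0" "k \<le> D"
  shows "e k = 0"
proof -
  define P where "P = (\<Sum>j\<le>D. monom (e j) j)"
  have "\<forall>t. poly P t = 0" using assms(1) by (simp add: P_def poly_sum poly_monom)
  then have "P = 0" by (simp add: poly_all_0_iff_0)
  moreover have "coeff P k = e k" using assms(2) by (simp add: P_def coeff_sum coeff_monom)
  ultimately show ?thesis by simp
qed

lemma gword_rescale_var:
  "gword (\<phi>(x := gscale t (\<phi> x))) w = gscale (t ^ count_list w x) (gword \<phi> w)"
proof (induction w)
  case Nil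
  then show ?case by (simp add: gword_def gscale_def)
next
  case (Cons y w)
  then show ?case
    by (cases "y = x") (simp_all add: gword_Cons gmul_gscale_left gmul_gscale_right gscale_gscale mult.commute)
qed

lemma count_component_TZ_Ecan:
  assumes r: "r \<in> (TZ_Ecan :: ('a::field_char_0) fpoly set)"
  shows "count_component x k r \<in> TZ_Ecan"
  unfolding TZ_Ecan_iff
proof (intro conjI allI impI ext)
  have rp: "r \<in> polys" and r0: "\<And>\<phi>. admissible \<phi> \<Longrightarrow> evalE r \<phi> = (\<lambda>S. 0)"
    using r by (auto simp: TZ_Ecan_iff)
  show "count_component x k r \<in> polys"
    using rp unfolding polys_def count_component_def by (auto elim: finite_subset[rotated])
  fix \<phi> :: "var \<Rightarrow> 'a grass" and S assume \<phi>: "admissible \<phi>"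
  define W where "W = psupp r"
  define D where "D = k + (\<Sum>w\<in>W. count_list w x)"
  define e where "e j = (\<Sum>w\<in>W. if count_list w x = j then r w * gword \<phi> w S else 0)" for j
  have fW: "finite W" using rp by (simp add: W_def polys_iff_finite_psupp)
  have evalE_r: "evalE r \<psi> = (\<lambda>S. \<Sum>w\<in>W. r w * gword \<psi> w S)" for \<psi>
    by (rule evalE_eq_sum[OF fW]) (simp add: W_def)
  have "(\<Sum>j\<le>D. e j * t ^ j) = 0" for t
  proof -
    have "(\<Sum>j\<le>D. e j * t ^ j) =
        (\<Sum>w\<in>W. \<Sum>j\<le>D. if count_list w x = j then r w * gword \<phi> w S * t ^ j else 0)"
      unfolding e_def by (subst sum.swap) (auto simp: sum_distrib_right intro!: sum.cong)
    also have "\<dots> = (\<Sum>w\<in>W. r w * (t ^ count_list w x * gword \<phi> w S))"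
    proof (rule sum.cong)
      fix w assume "w \<in> W"
      then have "count_list w x \<le> D"
        unfolding D_def using member_le_sum[of w W "\<lambda>w. count_list w x"] fW by simp
      then show "(\<Sum>j\<le>D. if count_list w x = j then r w * gword \<phi> w S * t ^ j else 0) =
          r w * (t ^ count_list w x * gword \<phi> w S)"
        by (simp add: ac_simps)
    qed simp
    also have "\<dots> = evalE r (\<phi>(x := gscale t (\<phi> x))) S"
      by (simp add: evalE_r gword_rescale_var) (simp add: gscale_def)
    also have "\<dots> = 0"
    proof -
      have "admissible (\<phi>(x := gscale t (\<phi> x)))"
        using \<phi> unfolding admissible_def by (auto intro: Ecan_gscale)
      then show ?thesis using r0 by simp
    qed
    finally show ?thesis .
  qed
  then have "e k = 0" by (rule coeff_eq_0_if_sum_powers_eq_0) (simp add: D_def)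
  moreover have "evalE (count_component x k r) \<phi> S = e k"
    unfolding e_def
    by (subst evalE_eq_sum[OF fW]) (auto simp: W_def psupp_def count_component_def intro!: sum.cong)
  ultimately show "evalE (count_component x k r) \<phi> S = 0" by simp
qed

lemma multidegree_component_TZ_Ecan:
  "r \<in> (TZ_Ecan :: ('a::field_char_0) fpoly set) \<Longrightarrow> multidegree_component v xs r \<in> TZ_Ecan"
  by (induction xs) (simp_all add: multidegree_component_def count_component_TZ_Ecan)

definition gpower :: "('a::field) grass \<Rightarrow> nat \<Rightarrow> 'a grass" where
  "gpower a n = (gmul a ^^ n) gone"

lemma gpower_0 [simp]: "gpower a 0 = gone"
  and gpower_Suc: "gpower a (Suc n) = gmul a (gpower a n)"
  by (simp_all add: gpower_def)

lemma gword_replicate: "gword \<phi> (replicate k y) = gpower (\<phi> y) k"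
  by (induction k) (simp_all add: gword_def gpower_Suc)

lemma gpower_Ecan: "a \<in> Ecan (int d) \<Longrightarrow> gpower a m \<in> Ecan (int (d * m))"
proof (induction m)
  case 0
  then show ?case using gone_Ecan by simp
next
  case (Suc m)
  then have "gmul a (gpower a m) \<in> Ecan (int d + int (d * m))" by (intro gmul_Ecan)
  then show ?case by (simp add: gpower_Suc algebra_simps)
qed

lemma gpower_gone: "gpower gone k = (gone :: ('a::field) grass)"
  by (induction k) (simp_all add: gpower_Suc gmul_gone_left Ecan_gelems[OF gone_Ecan])

lemma gpower_add_square_zero:
  assumes \<epsilon>: "\<epsilon> \<in> Ecan (int d)" and s: "s \<in> Ecan (int d)" and "even d"
    and sq: "gmul \<epsilon> \<epsilon> = (\<lambda>S. 0)"
  shows "gpower (\<lambda>S. \<epsilon> S + s S) (Suc m) =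
    (\<lambda>S. gpower s (Suc m) S + gscale (of_nat (Suc m)) (gmul \<epsilon> (gpower s m)) S)"
proof (induction m)
  case 0
  have "(\<lambda>S. \<epsilon> S + s S) \<in> Ecan (int d)" using \<epsilon> s by (rule Ecan_add)
  then show ?case using \<epsilon> s by (simp add: gpower_Suc gmul_gone_right Ecan_gelems add.commute)
next
  case (Suc m)
  define P where "P = gpower s (Suc m)"
  define G where "G = gpower s m"
  have gG: "G \<in> gelems"
    using gpower_Ecan[OF s] by (auto simp: G_def intro: Ecan_gelems)
  have g\<epsilon>: "\<epsilon> \<in> gelems" and gs: "s \<in> gelems" using \<epsilon> s by (auto intro: Ecan_gelems)
  have commute: "gmul s \<epsilon> = gmul \<epsilon> s"
    using gmul_commute_Ecan[OF s \<epsilon>] \<open>even d\<close> by simp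
  have "gmul \<epsilon> (gmul \<epsilon> G) = (\<lambda>S. 0)"
    using gmul_assoc[OF g\<epsilon> g\<epsilon> gG] sq by simp
  moreover have "gmul s (gmul \<epsilon> G) = gmul \<epsilon> P"
    using gmul_assoc[OF gs g\<epsilon> gG] gmul_assoc[OF g\<epsilon> gs gG]
    by (simp add: commute P_def G_def gpower_Suc)
  moreover have "gpower (\<lambda>S. \<epsilon> S + s S) (Suc (Suc m)) =
      gmul (\<lambda>S. \<epsilon> S + s S) (\<lambda>S. P S + gscale (of_nat (Suc m)) (gmul \<epsilon> G) S)"
    by (simp add: gpower_Suc[of _ "Suc m"] Suc P_def G_def)
  ultimately show ?case
    by (simp add: gmul_add_left gmul_add_right gmul_gscale_right P_def G_def gpower_Suc[of s "Suc m"])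
      (simp add: gscale_def algebra_simps)
qed

definition block :: "var \<Rightarrow> nat \<Rightarrow> nat set" where
  "block x j = (\<lambda>l. to_nat (x, j, l)) ` {..<nat (alpha x)}"

definition block_sum :: "var \<Rightarrow> nat set \<Rightarrow> ('a::field) grass" where
  "block_sum x J = (\<lambda>S. \<Sum>j\<in>J. gbasis (block x j) S)"

lemma finite_block [simp]: "finite (block x j)"
  by (simp add: block_def)

lemma card_block: "card (block x j) = nat (alpha x)"
  unfolding block_def by (subst card_image) (auto simp: inj_on_def)

lemma block_disjoint: "(x, j) \<noteq> (x', j') \<Longrightarrow> block x j \<inter> block x' j' = {}"
  unfolding block_def by (auto dest: injD[OF inj_to_nat])

lemma block_nonempty: "0 < alpha x \<Longrightarrow> block x j \<noteq> {}"
  unfolding block_def by (auto simp: zero_less_nat_eq[symmetric] simp del: zero_less_nat_eq)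

lemma block_sum_Ecan: "0 \<le> alpha x \<Longrightarrow> block_sum x J \<in> Ecan (alpha x)"
  unfolding block_sum_def using gbasis_Ecan[of "block x _"] by (intro Ecan_sum) (simp add: card_block)

lemma gpower_block_sum:
  assumes pos: "0 < alpha x" and even: "even (alpha x)" and "finite J"
  shows "(\<exists>c. c \<noteq> 0 \<and>
      gpower (block_sum x J) (card J) = gscale c (gbasis (\<Union>j\<in>J. block x j) :: ('a::field_char_0) grass)) \<and>
    gpower (block_sum x J :: 'a grass) (Suc (card J)) = (\<lambda>S. 0)"
  using \<open>finite J\<close>
proof (induction J rule: finite_induct)
  case empty
  show ?case by (intro conjI exI[of _ 1]) (simp_all add: gone_eq_gbasis gpower_Suc block_sum_def)
next
  case (insert i J)
  define d where "d = nat (alpha x)"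
  define \<epsilon> :: "'a grass" where "\<epsilon> = gbasis (block x i)"
  have \<epsilon>: "\<epsilon> \<in> Ecan (int d)"
    using gbasis_Ecan[of "block x i"] by (simp add: \<epsilon>_def card_block d_def)
  have s: "block_sum x J \<in> Ecan (int d)" using block_sum_Ecan[of x J] pos by (simp add: d_def)
  have "even d" using even pos by (simp add: d_def even_nat_iff)
  have sq: "gmul \<epsilon> \<epsilon> = (\<lambda>S. 0)" using block_nonempty[OF pos, of i] by (simp add: \<epsilon>_def gmul_gbasis)
  have split: "block_sum x (insert i J) = (\<lambda>S. \<epsilon> S + block_sum x J S)"
    using insert by (simp add: block_sum_def \<epsilon>_def)
  obtain c :: 'a where c: "c \<noteq> 0" "gpower (block_sum x J) (card J) = gscale c (gbasis (\<Union>j\<in>J. block x j))"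
    using insert.IH by blast
  have top: "gpower (block_sum x J :: 'a grass) (Suc (card J)) = (\<lambda>S. 0)"
    using insert.IH by blast
  have "block x i \<inter> block x j = {}" if "j \<in> J" for j
    using block_disjoint[of x i x j] insert(2) that by auto
  then have disj: "block x i \<inter> (\<Union>j\<in>J. block x j) = {}" by blast
  note expand = gpower_add_square_zero[OF \<epsilon> s \<open>even d\<close> sq]
  have "gpower (block_sum x (insert i J)) (card (insert i J)) =
      gscale (of_nat (Suc (card J))) (gmul \<epsilon> (gpower (block_sum x J) (card J)))"
    using insert(1,2) by (simp add: split expand top)
  also have "\<dots> = gscale (of_nat (Suc (card J)) * c * gsign (block x i) (\<Union>j\<in>J. block x j))
      (gbasis (\<Union>j\<in>insert i J. block x j))"
    using disj insert(1) by (simp add: c gmul_gscale_right \<epsilon>_def gmul_gbasis gscale_gscale mult.assoc)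
  finally have "gpower (block_sum x (insert i J)) (card (insert i J)) = \<dots>" .
  moreover have "gpower (block_sum x (insert i J) :: 'a grass) (Suc (card (insert i J))) = (\<lambda>S. 0)"
    using insert(1,2) by (simp add: split expand top gpower_Suc[of _ "Suc (card J)"])
  moreover have "(of_nat (Suc (card J)) :: 'a) * c * gsign (block x i) (\<Union>j\<in>J. block x j) \<noteq> 0"
    using c(1) by (simp del: of_nat_Suc)
  ultimately show ?case by blast
qed

definition witness_subst :: "var list \<Rightarrow> var \<Rightarrow> ('a::field) grass" where
  "witness_subst v x =
    (if alpha x < 0 then (\<lambda>S. 0) else if alpha x = 0 then gone else block_sum x {..<count_list v x})"

definition blocks :: "var list \<Rightarrow> var \<Rightarrow> nat set" where
  "blocks v x = (\<Union>j<count_list v x. block x j)"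

lemma admissible_witness_subst: "admissible (witness_subst v :: var \<Rightarrow> ('a::field) grass)"
  unfolding admissible_def witness_subst_def by (simp add: gone_Ecan block_sum_Ecan)

lemma blocks_disjoint: "x \<noteq> y \<Longrightarrow> blocks v x \<inter> blocks v y = {}"
  unfolding blocks_def using block_disjoint[of x _ y] by blast

lemma gpower_witness_subst:
  assumes "0 \<le> alpha y" "1 \<le> count_list v y" "odd (alpha y) \<Longrightarrow> count_list v y = 1"
  shows "\<exists>c. c \<noteq> 0 \<and>
    gpower (witness_subst v y) (count_list v y) = gscale c (gbasis (blocks v y) :: ('a::field_char_0) grass)"
proof -
  consider (zero) "alpha y = 0" | (odd) "0 < alpha y" "odd (alpha y)" | (even) "0 < alpha y" "even (alpha y)"
    using assms(1) by linarith
  then show ?thesis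
  proof cases
    case zero
    then show ?thesis
      by (intro exI[of _ 1])
        (simp add: witness_subst_def gpower_gone blocks_def block_def, simp add: gone_eq_gbasis)
  next
    case odd
    then have "count_list v y = 1" using assms(3) by simp
    moreover have "gbasis (block y 0) \<in> (gelems :: 'a grass set)"
      by (rule Ecan_gelems[OF gbasis_Ecan[OF finite_block]])
    ultimately show ?thesis using odd
      by (intro exI[of _ 1])
        (simp add: witness_subst_def block_sum_def blocks_def gpower_Suc gmul_gone_right lessThan_Suc)
  next
    case even
    then show ?thesis
      using gpower_block_sum[OF even, of "{..<count_list v y}", where 'a='a]
      by (simp add: witness_subst_def blocks_def)
  qed
qed

lemma sorted_replicate_decomp:
  "sorted (y # w) \<Longrightarrow> \<exists>k rest. 1 \<le> k \<and> y # w = replicate k y @ rest \<and> y \<notin> set rest"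
proof (induction w)
  case Nil
  then show ?case by (intro exI[of _ 1] exI[of _ "[]"]) simp
next
  case (Cons z w)
  show ?case
  proof (cases "z = y")
      case True
    have "sorted (y # w)" using Cons.prems by simp
    then obtain k rest where "1 \<le> k" "y # w = replicate k y @ rest" "y \<notin> set rest"
      using Cons.IH by blast
    then have "1 \<le> Suc k" "y # z # w = replicate (Suc k) y @ rest" "y \<notin> set rest"
      using True by simp_all
    then show ?thesis by blast
  next
    case False
    then have "y < z" using Cons.prems by (auto simp: less_le)
    moreover have "\<forall>u\<in>set w. z \<le> u" using Cons.prems by simp
    ultimately have "y \<notin> set (z # w)" by auto
    moreover have "y # z # w = replicate 1 y @ z # w" by simp
    ultimately show ?thesis by blast
  qed
qed

lemma count_list_replicate_self [simp]: "count_list (replicate k y) y = k"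
  by (induction k) auto

lemma gword_witness_subst:
  assumes "sorted w" "reduced_word v" "\<forall>x\<in>set w. count_list w x = count_list v x"
  shows "\<exists>c. c \<noteq> 0 \<and>
    gword (witness_subst v) w = gscale c (gbasis (\<Union>x\<in>set w. blocks v x) :: ('a::field_char_0) grass)"
  using assms
proof (induction "length w" arbitrary: w rule: less_induct)
  case less
  show ?case
  proof (cases w)
    case Nil
    then show ?thesis by (intro exI[of _ 1]) (simp add: gword_def gone_eq_gbasis)
  next
    case (Cons y w')
    then obtain k rest where k: "1 \<le> k" and w: "w = replicate k y @ rest" and y: "y \<notin> set rest"
      using sorted_replicate_decomp less.prems(1) by blast
    have "count_list w y = k" using w y by simp
    moreover have "count_list w y = count_list v y" using less.prems(3) Cons by simp
    ultimately have "count_list v y = k" by simp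
    then have "y \<in> set v" using k count_list_0_iff[of v y] by auto
    then have "0 \<le> alpha y" "odd (alpha y) \<Longrightarrow> k = 1"
      using less.prems(2) \<open>count_list v y = k\<close> by (auto simp: reduced_word_def)
    then obtain c1 :: 'a where c1: "c1 \<noteq> 0" "gpower (witness_subst v y) k = gscale c1 (gbasis (blocks v y))"
      using gpower_witness_subst[of y v] \<open>count_list v y = k\<close> k by auto
    have "length rest < length w" using w k by simp
    moreover have "sorted rest" using less.prems(1) w by (simp add: sorted_append)
    moreover have "\<forall>x\<in>set rest. count_list rest x = count_list v x"
    proof
      fix x assume "x \<in> set rest"
      then have "x \<noteq> y" "x \<in> set w" using y w by auto
      then have "count_list w x = count_list v x" using less.prems(3) by blast
      then show "count_list rest x = count_list v x" using w \<open>x \<noteq> y\<close> by simp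
    qed
    ultimately obtain c2 :: 'a where c2: "c2 \<noteq> 0"
      "gword (witness_subst v) rest = gscale c2 (gbasis (\<Union>x\<in>set rest. blocks v x))"
      using less.hyps less.prems(2) by blast
    have "blocks v y \<inter> blocks v x = {}" if "x \<in> set rest" for x
      using blocks_disjoint[of y x v] y that by auto
    then have disj: "blocks v y \<inter> (\<Union>x\<in>set rest. blocks v x) = {}" by blast
    have "gword (witness_subst v) w = gmul (gpower (witness_subst v y) k) (gword (witness_subst v) rest)"
      using w by (simp add: gword_append admissible_witness_subst gword_replicate)
    also have "\<dots> = gscale (c1 * c2 * gsign (blocks v y) (\<Union>x\<in>set rest. blocks v x))
        (gbasis (blocks v y \<union> (\<Union>x\<in>set rest. blocks v x)))"
      using disj by (simp add: c1 c2 gmul_gscale_left gmul_gscale_right gmul_gbasis gscale_gscale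
          blocks_def ac_simps)
    also have "blocks v y \<union> (\<Union>x\<in>set rest. blocks v x) = (\<Union>x\<in>set w. blocks v x)"
      using w k by (cases k) auto
    finally show ?thesis
      using c1(1) c2(1)
      by (intro exI[of _ "c1 * c2 * gsign (blocks v y) (\<Union>x\<in>set rest. blocks v x)"]) simp
  qed
qed

lemma sorted_eq_if_count_list_eq:
  "sorted w \<Longrightarrow> sorted v \<Longrightarrow> (\<And>x. count_list w x = count_list v x) \<Longrightarrow> w = v"
  by (metis count_mset multiset_eq_iff properties_for_sort sorted_sort_id)

lemma TZ_Ecan_eq_0_if_sorted_reduced_support:
  assumes r: "r \<in> (TZ_Ecan :: ('a::field_char_0) fpoly set)"
    and supp: "\<And>v. r v \<noteq> 0 \<Longrightarrow> sorted v \<and> reduced_word v"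
  shows "r = (\<lambda>w. 0)"
proof (rule ccontr)
  assume "r \<noteq> (\<lambda>w. 0)"
  then obtain v where v: "r v \<noteq> 0" by auto
  have "finite (set v \<union> (\<Union>w\<in>psupp r. set w))"
    using r by (simp add: TZ_Ecan_iff polys_iff_finite_psupp)
  then obtain xs where xs: "set xs = set v \<union> (\<Union>w\<in>psupp r. set w)"
    using finite_list by blast
  have "multidegree_component v xs r = pscale (r v) (mono v)"
  proof
    fix w
    have "w = v" if "r w \<noteq> 0" "\<forall>x\<in>set xs. count_list w x = count_list v x"
    proof (rule sorted_eq_if_count_list_eq)
      show "sorted w" "sorted v" using supp v that(1) by auto
      show "count_list w x = count_list v x" for x
        using that xs by (cases "x \<in> set xs") (auto simp: psupp_def)
    qed
    then show "multidegree_component v xs r w = pscale (r v) (mono v) w"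
      by (auto simp: multidegree_component_apply pscale_def mono_def)
  qed
  moreover have "multidegree_component v xs r \<in> TZ_Ecan"
    using r by (rule multidegree_component_TZ_Ecan)
  ultimately have "gscale (r v) (gword (witness_subst v) v) = (\<lambda>S. 0)"
    by (simp add: TZ_Ecan_iff admissible_witness_subst evalE_pscale evalE_mono)
  moreover obtain c :: 'a where "c \<noteq> 0" "gword (witness_subst v) v = gscale c (gbasis (\<Union>x\<in>set v. blocks v x))"
    using gword_witness_subst[of v v] supp v by auto
  ultimately show False
    using v by (auto simp: gscale_def gbasis_def fun_eq_iff dest: spec[of _ "\<Union>x\<in>set v. blocks v x"])
qed

lemma TZ_Ecan_normal_form_eq_0:
  assumes p: "p \<in> (TZ_Ecan :: ('a::field_char_0) fpoly set)"
  shows "normal_form p = (\<lambda>w. 0)"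
proof (rule TZ_Ecan_eq_0_if_sorted_reduced_support)
  interpret gens_ideal "TZ_Ecan :: 'a fpoly set"
    using TZ_ideal_TZ_Ecan gens_Ecan_subset_TZ_Ecan by unfold_locales (auto simp: TZ_ideal_def)
  have "pdiff p (pdiff p (normal_form p)) \<in> TZ_Ecan"
    using p by (intro pdiff_mem diff_normal_form_mem) (auto simp: TZ_Ecan_iff)
  then show "normal_form p \<in> TZ_Ecan" by (simp add: pdiff_def)
qed (rule normal_form_support)

lemma (in gens_ideal) TZ_Ecan_subset: "TZ_Ecan \<subseteq> I"
proof
  fix p :: "'a fpoly" assume p: "p \<in> TZ_Ecan"
  then have "pdiff p (normal_form p) \<in> I"
    by (intro diff_normal_form_mem) (simp add: TZ_Ecan_iff)
  then show "p \<in> I" using TZ_Ecan_normal_form_eq_0[OF p] by (simp add: pdiff_def)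
qed

theorem mainTheorem1:
  shows "(TZ_Ecan :: ('a::field_char_0) fpoly set) = TZ_generated gens_Ecan"
proof
  show "TZ_generated gens_Ecan \<subseteq> (TZ_Ecan :: 'a fpoly set)"
    unfolding TZ_generated_def using TZ_ideal_TZ_Ecan gens_Ecan_subset_TZ_Ecan by blast
  show "(TZ_Ecan :: 'a fpoly set) \<subseteq> TZ_generated gens_Ecan"
    unfolding TZ_generated_def
    using gens_ideal.TZ_Ecan_subset by (auto simp: gens_ideal_def TZ_ideal_def)
qed

end
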